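(* Let $R$ be a ring with a set of local units $E$ and let $E'\subseteq E$ be closed under joins $e_1\vee e_2=e_1+e_2-e_1e_2$ and meets $e_1\wedge e_2=e_1e_2$, ordered by $e_i\le e_j\iff e_ie_j=e_i$. For $e_i\le e_j$ let $\varphi_{ij}:Re_i\hookrightarrow Re_j$ be the inclusion, $\psi_{ji}:Re_j\to Re_i$, $m\mapsto me_i$, and $\phi_{ij}:\mathrm{End}_R(Re_i)^{\mathrm{op}}\to\mathrm{End}_R(Re_j)^{\mathrm{op}}$, $f\mapsto\varphi_{ij}\circ f\circ\psi_{ji}$; let $h_{ij}:e_iRe_i\hookrightarrow e_jRe_j$ be the inclusion. Then the directed systems $\langle\{\mathrm{End}_R(Re_i)^{\mathrm{op}}\}_{e_i\in E'},\{\phi_{ij}\}\rangle$ and $\langle\{e_iRe_i\}_{e_i\in E'},\{h_{ij}\}\rangle$ are isomorphic (via $f\mapsto f(e_i)$), and consequently $\varinjlim_{e_i\in E'}\mathrm{End}_R(Re_i)^{\mathrm{op}}\cong\bigcup_{e_i\in E'}e_iRe_i$ as rings with local units.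
   Context: A ring with local units is a ring $R$ with a set $E$ of pairwise commuting idempotents such that $R=\bigcup_{e\in E}eRe$. $\mathrm{End}_R(M)$ is the ring of left $R$-module endomorphisms with multiplication given by composition, and $^{\mathrm{op}}$ denotes the opposite ring. *)

theory Defs
  imports Main
begin

text \<open>Rings are (possibly non-unital) rings given by the type class ring; the whole ring R
is the universe of the type.\<close>

definition corner :: "'a::ring \<Rightarrow> 'a set" where
  "corner e = {e * r * e | r. True}"

definition lmod :: "'a::ring \<Rightarrow> 'a set" where
  "lmod e = {r * e | r. True}"

definition local_units :: "'a::ring set \<Rightarrow> bool" where
  "local_units E \<longleftrightarrow> (\<forall>e\<in>E. e * e = e) \<and> (\<forall>e\<in>E. \<forall>f\<in>E. e * f = f * e)
     \<and> (\<forall>x. \<exists>e\<in>E. x \<in> corner e)"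

definition ljoin :: "'a::ring \<Rightarrow> 'a \<Rightarrow> 'a" where
  "ljoin e1 e2 = e1 + e2 - e1 * e2"

definition lmeet :: "'a::ring \<Rightarrow> 'a \<Rightarrow> 'a" where
  "lmeet e1 e2 = e1 * e2"

definition lle :: "'a::ring \<Rightarrow> 'a \<Rightarrow> bool" where
  "lle e1 e2 \<longleftrightarrow> e1 * e2 = e1"

text \<open>End_R(Re): left R-module endomorphisms of Re, extended by 0 outside Re.\<close>
definition endo :: "'a::ring \<Rightarrow> ('a \<Rightarrow> 'a) set" where
  "endo e = {f. (\<forall>x\<in>lmod e. f x \<in> lmod e)
      \<and> (\<forall>x\<in>lmod e. \<forall>y\<in>lmod e. f (x + y) = f x + f y)
      \<and> (\<forall>r. \<forall>x\<in>lmod e. f (r * x) = r * f x)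
      \<and> (\<forall>x. x \<notin> lmod e \<longrightarrow> f x = 0)}"

definition endo_add :: "('a::ring \<Rightarrow> 'a) \<Rightarrow> ('a \<Rightarrow> 'a) \<Rightarrow> 'a \<Rightarrow> 'a" where
  "endo_add f g = (\<lambda>x. f x + g x)"

definition endo_opmult :: "('a::ring \<Rightarrow> 'a) \<Rightarrow> ('a \<Rightarrow> 'a) \<Rightarrow> 'a \<Rightarrow> 'a" where
  "endo_opmult f g = g \<circ> f"

definition endo_id :: "'a::ring \<Rightarrow> 'a \<Rightarrow> 'a" where
  "endo_id e = (\<lambda>x. if x \<in> lmod e then x else 0)"

text \<open>phi_ij f = varphi_ij \<circ> f \<circ> psi_ji (inclusion after f after right multiplication by e_i),
  extended by 0 outside Re_j.\<close>
definition phi :: "'a::ring \<Rightarrow> 'a \<Rightarrow> ('a \<Rightarrow> 'a) \<Rightarrow> 'a \<Rightarrow> 'a" where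
  "phi ei ej f = (\<lambda>x. if x \<in> lmod ej then f (x * ei) else 0)"

definition dl_rel :: "'a::ring set \<Rightarrow> (('a \<times> ('a \<Rightarrow> 'a)) \<times> ('a \<times> ('a \<Rightarrow> 'a))) set" where
  "dl_rel E' = {((i, f), (j, g)). i \<in> E' \<and> j \<in> E' \<and> f \<in> endo i \<and> g \<in> endo j \<and>
       (\<exists>k\<in>E'. lle i k \<and> lle j k \<and> phi i k f = phi j k g)}"

definition dl_carrier :: "'a::ring set \<Rightarrow> ('a \<times> ('a \<Rightarrow> 'a)) set set" where
  "dl_carrier E' = (SIGMA i:E'. endo i) // dl_rel E'"

definition dl_class :: "'a::ring set \<Rightarrow> 'a \<Rightarrow> ('a \<Rightarrow> 'a) \<Rightarrow> ('a \<times> ('a \<Rightarrow> 'a)) set" where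
  "dl_class E' i f = dl_rel E' `` {(i, f)}"

definition dl_add :: "'a::ring set \<Rightarrow> ('a \<times> ('a \<Rightarrow> 'a)) set \<Rightarrow> ('a \<times> ('a \<Rightarrow> 'a)) set
     \<Rightarrow> ('a \<times> ('a \<Rightarrow> 'a)) set" where
  "dl_add E' X Y = (let (i, f) = (SOME p. p \<in> X); (j, g) = (SOME q. q \<in> Y); k = ljoin i j
      in dl_class E' k (endo_add (phi i k f) (phi j k g)))"

definition dl_mult :: "'a::ring set \<Rightarrow> ('a \<times> ('a \<Rightarrow> 'a)) set \<Rightarrow> ('a \<times> ('a \<Rightarrow> 'a)) set
     \<Rightarrow> ('a \<times> ('a \<Rightarrow> 'a)) set" where
  "dl_mult E' X Y = (let (i, f) = (SOME p. p \<in> X); (j, g) = (SOME q. q \<in> Y); k = ljoin i j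
      in dl_class E' k (endo_opmult (phi i k f) (phi j k g)))"

end

theory Submission
  imports Defs
begin

text \<open>Every endomorphism f of Re is right multiplication by f(e), an element of eRe, since
  f(x) = f(xe) = x f(e). Evaluation at e therefore identifies End_R(Re)^op with eRe, reversed
  composition becoming the product of R, and it turns phi_ij into the inclusion of e_iRe_i into
  e_jRe_j. Consequently two representatives (e_i, f) and (e_j, g) of the direct limit are
  identified exactly when f(e_i) = g(e_j): the direct limit is the quotient of the disjoint
  union of the End_R(Re_i) by the kernel of evaluation, which is the union of the corners.
  Sums and products in the limit are computed at the join of two units, which lies above both,
  so they agree with those of R.\<close>

lemma equiv_kernel_restrict: "equiv A (Restr (kernel f) A)"
  unfolding equiv_def refl_on_def sym_def trans_def kernel_def by auto

lemma kernel_restrict_Image: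
  "a \<in> A \<Longrightarrow> (Restr (kernel f) A) `` {a} = {x \<in> A. f x = f a}"
  unfolding kernel_def by auto

lemma some_in_quotient:
  assumes "equiv A r" "X \<in> A // r"
  shows "(SOME x. x \<in> X) \<in> X"
  using in_quotient_imp_non_empty[OF assms] by (simp add: some_in_eq)

lemma value_some_kernel_restrict_class:
  "a \<in> A \<Longrightarrow> f (SOME x. x \<in> (Restr (kernel f) A) `` {a}) = f a"
  using some_in_quotient[OF equiv_kernel_restrict quotientI, of a A f]
  by (simp add: kernel_restrict_Image)

lemma bij_betw_quotient_kernel_restrict:
  "bij_betw (\<lambda>X. f (SOME x. x \<in> X)) (A // (Restr (kernel f) A)) (f ` A)"
proof (rule bij_betw_imageI)
  show "inj_on (\<lambda>X. f (SOME x. x \<in> X)) (A // (Restr (kernel f) A))"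
  proof (rule inj_onI)
    fix X Y
    assume "X \<in> A // (Restr (kernel f) A)" "Y \<in> A // (Restr (kernel f) A)"
      and eq: "f (SOME x. x \<in> X) = f (SOME x. x \<in> Y)"
    then obtain a b where "a \<in> A" "X = (Restr (kernel f) A) `` {a}"
      and "b \<in> A" "Y = (Restr (kernel f) A) `` {b}"
      by (auto elim!: quotientE)
    moreover from this have "f a = f b" using eq value_some_kernel_restrict_class by metis
    ultimately show "X = Y" by (simp add: kernel_restrict_Image)
  qed
  have "A // Restr (kernel f) A = (\<lambda>a. Restr (kernel f) A `` {a}) ` A"
    by (simp add: proj_image[symmetric] proj_def)
  then have "(\<lambda>X. f (SOME x. x \<in> X)) ` (A // (Restr (kernel f) A))
      = (\<lambda>a. f (SOME x. x \<in> Restr (kernel f) A `` {a})) ` A"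
    by (simp only: image_image)
  also have "\<dots> = f ` A"
    by (intro image_cong refl value_some_kernel_restrict_class)
  finally show "(\<lambda>X. f (SOME x. x \<in> X)) ` (A // (Restr (kernel f) A)) = f ` A" .
qed

lemma lmod_idem_iff:
  fixes e :: "'a::ring"
  assumes "e * e = e"
  shows "x \<in> lmod e \<longleftrightarrow> x * e = x"
proof
  assume "x \<in> lmod e"
  then obtain r where "x = r * e" by (auto simp: lmod_def)
  then show "x * e = x" using assms by (simp add: mult.assoc)
next
  assume "x * e = x"
  then show "x \<in> lmod e" unfolding lmod_def by (metis (mono_tags, lifting) mem_Collect_eq)
qed

lemma corner_idem_iff:
  fixes e :: "'a::ring"
  assumes "e * e = e"
  shows "c \<in> corner e \<longleftrightarrow> e * c = c \<and> c * e = c"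
proof
  assume "c \<in> corner e"
  then obtain r where c: "c = e * r * e" by (auto simp: corner_def)
  then show "e * c = c \<and> c * e = c" using assms by (metis mult.assoc)
next
  assume "e * c = c \<and> c * e = c"
  then have "c = e * c * e" by simp
  then show "c \<in> corner e" unfolding corner_def by blast
qed

lemma corner_add:
  fixes e :: "'a::ring"
  assumes "e * e = e" "a \<in> corner e" "b \<in> corner e"
  shows "a + b \<in> corner e"
  using assms by (simp add: corner_idem_iff distrib_left distrib_right)

lemma corner_mult:
  fixes e :: "'a::ring"
  assumes "e * e = e" "a \<in> corner e" "b \<in> corner e"
  shows "a * b \<in> corner e"
  using assms by (metis corner_idem_iff mult.assoc)

lemma corner_mono:
  fixes e k :: "'a::ring"
  assumes "e * e = e" "k * k = k" "e * k = e" "k * e = e"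
  shows "corner e \<subseteq> corner k"
proof
  fix c assume "c \<in> corner e"
  then have c: "e * c = c" "c * e = c" using assms(1) corner_idem_iff by blast+
  have "k * c = c" by (metis c(1) assms(4) mult.assoc)
  moreover have "c * k = c" by (metis c(2) assms(3) mult.assoc)
  ultimately show "c \<in> corner k" using assms(2) corner_idem_iff by blast
qed

lemma lle_ljoin:
  fixes e f :: "'a::ring"
  assumes "e * e = e" "f * f = f" "e * f = f * e"
  shows "lle e (ljoin e f)" "lle f (ljoin e f)"
proof -
  have "e * (e * f) = e * f" "f * (e * f) = e * f"
    using assms by (metis mult.assoc)+
  then show "lle e (ljoin e f)" "lle f (ljoin e f)"
    using assms by (simp_all add: lle_def ljoin_def algebra_simps)
qed

definition right_mult :: "'a::ring \<Rightarrow> 'a \<Rightarrow> 'a \<Rightarrow> 'a" where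
  "right_mult e c = (\<lambda>x. if x \<in> lmod e then x * c else 0)"

lemma endo_apply_eq_mult:
  fixes e :: "'a::ring"
  assumes "e * e = e" "f \<in> endo e" "x \<in> lmod e"
  shows "f x = x * f e"
proof -
  have "e \<in> lmod e" using assms(1) lmod_idem_iff by blast
  then have "f (x * e) = x * f e" using assms(2) by (simp add: endo_def)
  then show ?thesis using assms lmod_idem_iff by metis
qed

lemma endo_apply_unit_in_corner:
  fixes e :: "'a::ring"
  assumes "e * e = e" "f \<in> endo e"
  shows "f e \<in> corner e"
proof -
  have e: "e \<in> lmod e" using assms(1) lmod_idem_iff by blast
  then have "f e \<in> lmod e" using assms(2) by (simp add: endo_def)
  then have "f e * e = f e" using assms(1) lmod_idem_iff by blast
  moreover have "f (e * e) = e * f e" using assms(2) e by (simp add: endo_def)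
  ultimately show ?thesis using assms(1) corner_idem_iff by metis
qed

lemma endo_eq_right_mult:
  fixes e :: "'a::ring"
  assumes "e * e = e" "f \<in> endo e"
  shows "f = right_mult e (f e)"
  using endo_apply_eq_mult[OF assms] assms(2) by (auto simp: right_mult_def endo_def)

lemma right_mult_in_endo:
  fixes e :: "'a::ring"
  assumes "e * e = e" "c \<in> corner e"
  shows "right_mult e c \<in> endo e"
proof -
  have "c * e = c" using assms corner_idem_iff by blast
  then have "x \<in> lmod e \<Longrightarrow> x * c \<in> lmod e" for x
    using assms(1) lmod_idem_iff by (metis mult.assoc)
  moreover have "x \<in> lmod e \<Longrightarrow> r * x \<in> lmod e" for x r
    using assms(1) lmod_idem_iff by (metis mult.assoc)
  moreover have "x \<in> lmod e \<Longrightarrow> y \<in> lmod e \<Longrightarrow> x + y \<in> lmod e" for x y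
    using assms(1) lmod_idem_iff by (metis distrib_right)
  ultimately show ?thesis
    unfolding endo_def right_mult_def by (auto simp: distrib_right mult.assoc)
qed

lemma right_mult_apply_unit:
  fixes e :: "'a::ring"
  assumes "e * e = e" "c \<in> corner e"
  shows "right_mult e c e = c"
  using assms by (simp add: right_mult_def lmod_idem_iff corner_idem_iff)

lemma bij_betw_endo_corner:
  fixes e :: "'a::ring"
  assumes "e * e = e"
  shows "bij_betw (\<lambda>f. f e) (endo e) (corner e)"
proof (rule bij_betw_imageI)
  show "inj_on (\<lambda>f. f e) (endo e)"
    by (rule inj_onI) (metis endo_eq_right_mult[OF assms])
  show "(\<lambda>f. f e) ` endo e = corner e"
  proof (intro subset_antisym subsetI)
    fix c assume "c \<in> corner e"
    then show "c \<in> (\<lambda>f. f e) ` endo e"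
      using right_mult_in_endo[OF assms] right_mult_apply_unit[OF assms]
      by (metis image_eqI)
  qed (use endo_apply_unit_in_corner[OF assms] in blast)
qed

lemma endo_add_right_mult:
  "endo_add (right_mult e a) (right_mult e b) = right_mult e (a + b)"
  by (auto simp: endo_add_def right_mult_def distrib_left)

lemma endo_opmult_right_mult:
  fixes e :: "'a::ring"
  assumes "e * e = e" "a \<in> corner e"
  shows "endo_opmult (right_mult e a) (right_mult e b) = right_mult e (a * b)"
proof
  fix x
  have "a * e = a" using assms corner_idem_iff by blast
  then have "x \<in> lmod e \<Longrightarrow> x * a \<in> lmod e" using assms(1) lmod_idem_iff by (metis mult.assoc)
  moreover have "0 \<in> lmod e" using lmod_idem_iff[OF assms(1), of 0] by simp
  ultimately show "endo_opmult (right_mult e a) (right_mult e b) x = right_mult e (a * b) x"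
    by (auto simp: endo_opmult_def right_mult_def mult.assoc)
qed

lemma endo_opmult_apply_unit:
  fixes e :: "'a::ring"
  assumes "e * e = e" "f \<in> endo e" "g \<in> endo e"
  shows "endo_opmult f g e = f e * g e"
proof -
  have "f e \<in> lmod e"
    using endo_apply_unit_in_corner[OF assms(1,2)] corner_idem_iff lmod_idem_iff assms(1) by blast
  then show ?thesis using endo_apply_eq_mult[OF assms(1,3)] by (simp add: endo_opmult_def)
qed

lemma endo_id_eq_right_mult:
  fixes e :: "'a::ring"
  assumes "e * e = e"
  shows "endo_id e = right_mult e e"
  using assms by (auto simp: endo_id_def right_mult_def lmod_idem_iff)

lemma phi_eq_right_mult:
  fixes e k :: "'a::ring"
  assumes "e * e = e" "f \<in> endo e"
  shows "phi e k f = right_mult k (f e)"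
proof
  fix x
  have "x * e \<in> lmod e" using assms(1) lmod_idem_iff by (metis mult.assoc)
  then have "f (x * e) = x * e * f e" using endo_apply_eq_mult assms by blast
  also have "\<dots> = x * f e"
    using endo_apply_unit_in_corner[OF assms] corner_idem_iff[OF assms(1)] by (metis mult.assoc)
  finally show "phi e k f x = right_mult k (f e) x" by (simp add: phi_def right_mult_def)
qed

definition unit_value :: "'a \<times> ('a \<Rightarrow> 'a) \<Rightarrow> 'a" where
  "unit_value = (\<lambda>(e, f). f e)"

definition dl_value :: "('a \<times> ('a \<Rightarrow> 'a)) set \<Rightarrow> 'a" where
  "dl_value X = unit_value (SOME p. p \<in> X)"

locale join_closed_idempotents =
  fixes U :: "'a::ring set"
  assumes idem: "e \<in> U \<Longrightarrow> e * e = e"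
    and commute: "e \<in> U \<Longrightarrow> f \<in> U \<Longrightarrow> e * f = f * e"
    and ljoin_closed: "e \<in> U \<Longrightarrow> f \<in> U \<Longrightarrow> ljoin e f \<in> U"
begin

lemma lle_left_mult_eq: "e \<in> U \<Longrightarrow> k \<in> U \<Longrightarrow> lle e k \<Longrightarrow> k * e = e"
  using commute by (simp add: lle_def)

lemma lle_ljoin_in:
  assumes "e \<in> U" "f \<in> U"
  shows "lle e (ljoin e f)" "lle f (ljoin e f)"
  using lle_ljoin[OF idem[OF assms(1)] idem[OF assms(2)] commute[OF assms]] .

lemma corner_mono_lle:
  assumes "e \<in> U" "k \<in> U" "lle e k"
  shows "corner e \<subseteq> corner k"
  using corner_mono[OF idem[OF assms(1)] idem[OF assms(2)]] lle_left_mult_eq[OF assms] assms(3)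
  by (simp add: lle_def)

lemma phi_in_endo:
  assumes "e \<in> U" "k \<in> U" "lle e k" "f \<in> endo e"
  shows "phi e k f \<in> endo k" "phi e k f k = f e"
proof -
  have "f e \<in> corner k"
    using corner_mono_lle endo_apply_unit_in_corner[OF idem] assms by blast
  then show "phi e k f \<in> endo k" "phi e k f k = f e"
    using phi_eq_right_mult[OF idem] right_mult_in_endo[OF idem] right_mult_apply_unit[OF idem]
      assms by simp_all
qed

lemma dl_rel_eq_kernel:
  "dl_rel U = Restr (kernel unit_value) (SIGMA e:U. endo e)"
proof (intro set_eqI iffI; unfold split_paired_all)
  fix e f d g assume "((e, f), (d, g)) \<in> dl_rel U"
  then obtain k where "e \<in> U" "d \<in> U" "f \<in> endo e" "g \<in> endo d"
    "k \<in> U" "lle e k" "lle d k" "phi e k f = phi d k g"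
    unfolding dl_rel_def by blast
  moreover from this have "f e = g d"
    using phi_in_endo(2)[of e k f] phi_in_endo(2)[of d k g] by simp
  ultimately show "((e, f), (d, g)) \<in> Restr (kernel unit_value) (SIGMA e:U. endo e)"
    by (simp add: kernel_def unit_value_def)
next
  fix e f d g
  assume "((e, f), (d, g)) \<in> Restr (kernel unit_value) (SIGMA e:U. endo e)"
  then have e: "e \<in> U" "f \<in> endo e" and d: "d \<in> U" "g \<in> endo d" and "f e = g d"
    by (auto simp: kernel_def unit_value_def)
  define k where "k = ljoin e d"
  have k: "k \<in> U" "lle e k" "lle d k" using ljoin_closed lle_ljoin_in e d k_def by auto
  have "phi e k f = phi d k g"
    using phi_eq_right_mult[OF idem] e d \<open>f e = g d\<close> by simp
  with e d k show "((e, f), (d, g)) \<in> dl_rel U"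
    by (simp add: dl_rel_def) blast
qed

lemma equiv_dl_rel: "equiv (SIGMA e:U. endo e) (dl_rel U)"
  by (simp add: dl_rel_eq_kernel equiv_kernel_restrict)

lemma bij_betw_dl_value: "bij_betw dl_value (dl_carrier U) (\<Union>e\<in>U. corner e)"
proof -
  have "unit_value ` (SIGMA e:U. endo e) = (\<Union>e\<in>U. (\<lambda>f. f e) ` endo e)"
    unfolding unit_value_def by force
  also have "\<dots> = (\<Union>e\<in>U. corner e)"
    using bij_betw_endo_corner[OF idem] by (simp add: bij_betw_def)
  finally show ?thesis
    using bij_betw_quotient_kernel_restrict[of unit_value "SIGMA e:U. endo e"]
    unfolding dl_value_def[abs_def] dl_carrier_def dl_rel_eq_kernel by simp
qed

lemma dl_value_dl_class:
  "e \<in> U \<Longrightarrow> f \<in> endo e \<Longrightarrow> dl_value (dl_class U e f) = f e"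
  using value_some_kernel_restrict_class[of "(e, f)" "SIGMA e:U. endo e" unit_value]
  by (simp add: dl_value_def dl_class_def dl_rel_eq_kernel unit_value_def)

lemma dl_value_dl_class_right_mult:
  "k \<in> U \<Longrightarrow> c \<in> corner k \<Longrightarrow> dl_value (dl_class U k (right_mult k c)) = c"
  by (simp add: dl_value_dl_class right_mult_in_endo right_mult_apply_unit idem)

lemma dl_value_dl_class_endo_id: "e \<in> U \<Longrightarrow> dl_value (dl_class U e (endo_id e)) = e"
  using idem by (simp add: endo_id_eq_right_mult dl_value_dl_class_right_mult corner_idem_iff)

lemma dl_carrier_some:
  assumes "X \<in> dl_carrier U"
  obtains e f where "(SOME p. p \<in> X) = (e, f)" "e \<in> U" "f \<in> endo e" "dl_value X = f e"
  using some_in_quotient[OF equiv_dl_rel] in_quotient_imp_subset[OF equiv_dl_rel] assms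
  by (fastforce simp: dl_carrier_def dl_value_def unit_value_def)

lemma dl_value_dl_add_mult:
  assumes "X \<in> dl_carrier U" "Y \<in> dl_carrier U"
  shows "dl_value (dl_add U X Y) = dl_value X + dl_value Y"
    and "dl_value (dl_mult U X Y) = dl_value X * dl_value Y"
proof -
  obtain e f where X: "(SOME p. p \<in> X) = (e, f)" "e \<in> U" "f \<in> endo e" "dl_value X = f e"
    using dl_carrier_some[OF assms(1)] .
  obtain d g where Y: "(SOME p. p \<in> Y) = (d, g)" "d \<in> U" "g \<in> endo d" "dl_value Y = g d"
    using dl_carrier_some[OF assms(2)] .
  define k where "k = ljoin e d"
  have k: "k \<in> U" "lle e k" "lle d k" using ljoin_closed lle_ljoin_in X Y k_def by auto
  have phi_f: "phi e k f = right_mult k (f e)" and phi_g: "phi d k g = right_mult k (g d)"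
    using phi_eq_right_mult[OF idem] X Y by simp_all
  have "f e \<in> corner k" "g d \<in> corner k"
    using corner_mono_lle endo_apply_unit_in_corner[OF idem] X Y k by blast+
  then show "dl_value (dl_add U X Y) = dl_value X + dl_value Y"
    and "dl_value (dl_mult U X Y) = dl_value X * dl_value Y"
    using X Y k idem[OF k(1)]
    by (simp_all add: dl_add_def dl_mult_def k_def[symmetric] phi_f phi_g endo_add_right_mult
        endo_opmult_right_mult corner_add corner_mult dl_value_dl_class_right_mult)
qed

end

theorem theorem3p13:
  fixes E E' :: "'a::ring set"
  assumes "local_units E"
    and "E' \<subseteq> E"
    and "\<forall>a\<in>E'. \<forall>b\<in>E'. ljoin a b \<in> E' \<and> lmeet a b \<in> E'"
  shows "(\<forall>i\<in>E'.
            bij_betw (\<lambda>f. f i) (endo i) (corner i)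
          \<and> (\<forall>f\<in>endo i. \<forall>g\<in>endo i. endo_add f g i = f i + g i)
          \<and> (\<forall>f\<in>endo i. \<forall>g\<in>endo i. endo_opmult f g i = f i * g i))
       \<and> (\<forall>i\<in>E'. \<forall>j\<in>E'. lle i j \<longrightarrow> (\<forall>f\<in>endo i. phi i j f \<in> endo j \<and> phi i j f j = f i))
       \<and> (\<exists>\<Phi>. bij_betw \<Phi> (dl_carrier E') (\<Union>i\<in>E'. corner i)
          \<and> (\<forall>X\<in>dl_carrier E'. \<forall>Y\<in>dl_carrier E'.
               \<Phi> (dl_add E' X Y) = \<Phi> X + \<Phi> Y \<and> \<Phi> (dl_mult E' X Y) = \<Phi> X * \<Phi> Y)
          \<and> (\<forall>i\<in>E'. \<Phi> (dl_class E' i (endo_id i)) = i))"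
proof -
  interpret join_closed_idempotents E'
    using assms unfolding local_units_def by unfold_locales blast+
  show ?thesis
    using bij_betw_endo_corner[OF idem] endo_opmult_apply_unit[OF idem] phi_in_endo
      bij_betw_dl_value dl_value_dl_add_mult dl_value_dl_class_endo_id
    by (auto simp: endo_add_def)
qed

end
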